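(* Let $G=(V,E)$ be a transitive and finite directed graph with in-degree at least $2$ at every vertex, and let $\widehat{G}=(\widehat{V},\widehat{E})$ be the graph obtained by repeatedly applying a $v$-lag at every vertex $v$ of in-degree at least $3$. Then $\widehat{G}$ is in-degree $2$-regular, and there is an embedding $V\subseteq\widehat{V}$ which extends to a bijection $\theta$ from the set $E^\bullet$ of finite paths of $G$ onto the set of finite paths in $\widehat{G}$ whose range and source lie in $V$.
   Context: A directed graph $G=(V,E,r,s)$; in-degree of $v$ is $|r^{-1}(v)|$; in-degree $2$-regular means every vertex has in-degree exactly $2$. Paths $e_1\cdots e_n$ satisfy $s(e_i)=r(e_{i+1})$, vertices are paths of length $0$; "edge from $u$ to $w$" has source $u$, range $w$; transitive means there is a path between any two vertices. The $v$-lag at a vertex $v$ of in-degree $d_v\ge3$: enumerate the edges with range $v$ as $e_0,\dots,e_{d_v-1}$ with sources $u_0,\dots,u_{d_v-1}$; keep all other vertices and edges; add vertices $v_1,\dots,v_{d_v-2}$, an edge $f_1$ from $v_1$ to $v$, edges $f_i$ from $v_i$ to $v_{i-1}$ ($2\le i\le d_v-2$); replace $e_0$ by $\hat e_0$ from $u_0$ to $v$, $e_j$ by $\hat e_j$ from $u_j$ to $v_j$ ($1\le j\le d_v-2$), $e_{d_v-1}$ by $\hat e_{d_v-1}$ from $u_{d_v-1}$ to $v_{d_v-2}$. Only edges into $v$ change, so lags at different vertices commute. The map $\theta$ at one lag sends vertices to themselves, edges not into $v$ to themselves, $e_j$ to the path $f_1\cdots f_j\hat e_j$ (with $f_1\cdots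 f_{d_v-2}\hat e_{d_v-1}$ for $j=d_v-1$ and $\hat e_0$ for $j=0$), extended to paths by concatenation; the $\theta$ for $\widehat{G}$ is the composite of these maps. *)

theory Defs
  imports "Graph_Theory.Digraph"
begin

text \<open>Conventions: a directed graph G = (V,E,r,s) is a pre_digraph with verts = V, arcs = E,
  head = r (range) and tail = s (source).\<close>

text \<open>Finite paths: a vertex (length 0, Inl v), or a nonempty list of edges e_1 ... e_n
  (Inr [e_1,...,e_n]) with s(e_i) = r(e_(i+1)).\<close>

type_synonym ('a,'b) gpath = "'a + 'b list"

definition dpaths :: "('a,'b) pre_digraph \<Rightarrow> ('a,'b) gpath set" where
  "dpaths G = Inl ` verts G \<union>
     {Inr es | es. es \<noteq> [] \<and> set es \<subseteq> arcs G \<and>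
        (\<forall>i. Suc i < length es \<longrightarrow> tail G (es ! i) = head G (es ! Suc i))}"

fun prange :: "('a,'b) pre_digraph \<Rightarrow> ('a,'b) gpath \<Rightarrow> 'a" where
  "prange G (Inl v) = v"
| "prange G (Inr es) = head G (hd es)"

fun psource :: "('a,'b) pre_digraph \<Rightarrow> ('a,'b) gpath \<Rightarrow> 'a" where
  "psource G (Inl v) = v"
| "psource G (Inr es) = tail G (last es)"

definition transitive_graph :: "('a,'b) pre_digraph \<Rightarrow> bool" where
  "transitive_graph G \<longleftrightarrow>
     (\<forall>u\<in>verts G. \<forall>w\<in>verts G. \<exists>p\<in>dpaths G. prange G p = u \<and> psource G p = w)"

definition in_degree_2_regular :: "('a,'b) pre_digraph \<Rightarrow> bool" where
  "in_degree_2_regular G \<longleftrightarrow> (\<forall>v\<in>verts G. in_degree G v = 2)"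

definition valid_enum :: "('a,'b) pre_digraph \<Rightarrow> ('a \<Rightarrow> nat \<Rightarrow> 'b) \<Rightarrow> bool" where
  "valid_enum G enum \<longleftrightarrow>
     (\<forall>v\<in>verts G. bij_betw (enum v) {..<in_degree G v} (in_arcs G v))"

definition eidx :: "('a,'b) pre_digraph \<Rightarrow> ('a \<Rightarrow> nat \<Rightarrow> 'b) \<Rightarrow> 'b \<Rightarrow> nat" where
  "eidx G enum e = (THE j. j < in_degree G (head G e) \<and> enum (head G e) j = e)"

text \<open>Position of the new range of the edge hat e: for e = e_j into v with d_v \<ge> 3,
  hat e_0 goes into v = v_0, hat e_j into v_j for 1 \<le> j \<le> d_v - 2, and hat e_(d_v-1) into
  v_(d_v-2); if d_v < 3 the edge is unchanged (index 0, i.e. v itself).\<close>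

definition lagpos :: "('a,'b) pre_digraph \<Rightarrow> ('a \<Rightarrow> nat \<Rightarrow> 'b) \<Rightarrow> 'b \<Rightarrow> nat" where
  "lagpos G enum e =
     (if 3 \<le> in_degree G (head G e)
      then min (eidx G enum e) (in_degree G (head G e) - 2) else 0)"

text \<open>The graph \<widehat>G obtained by performing the v-lag at every vertex v with d_v \<ge> 3
  (lags at different vertices commute, so they are performed simultaneously).
  Vertices: (v,0) is the original vertex v; (v,i) for 1 \<le> i \<le> d_v - 2 is the new vertex v_i.
  Edges: Inl e is hat e (or e itself if it is unchanged); Inr (v,i) is the new edge f_i at v,
  from v_i to v_(i-1) (where v_0 = v).\<close>

definition lag_graph :: "('a,'b) pre_digraph \<Rightarrow> ('a \<Rightarrow> nat \<Rightarrow> 'b) \<Rightarrow>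
    ('a \<times> nat, 'b + ('a \<times> nat)) pre_digraph" where
  "lag_graph G enum =
    \<lparr> verts = {(v,i). v \<in> verts G \<and> (i = 0 \<or> (3 \<le> in_degree G v \<and> 1 \<le> i \<and> i \<le> in_degree G v - 2))},
      arcs = Inl ` arcs G \<union>
             Inr ` {(v,i). v \<in> verts G \<and> 3 \<le> in_degree G v \<and> 1 \<le> i \<and> i \<le> in_degree G v - 2},
      tail = (\<lambda>x. case x of Inl e \<Rightarrow> (tail G e, 0) | Inr (v,i) \<Rightarrow> (v,i)),
      head = (\<lambda>x. case x of Inl e \<Rightarrow> (head G e, lagpos G enum e) | Inr (v,i) \<Rightarrow> (v, i - 1)) \<rparr>"

text \<open>The map theta on edges: e_j \<mapsto> f_1 ... f_k hat e_j with k = lagpos (so k = j, or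
  d_v - 2 for j = d_v - 1, and the path hat e_0 for j = 0); unchanged edges map to themselves.\<close>

definition theta_edge :: "('a,'b) pre_digraph \<Rightarrow> ('a \<Rightarrow> nat \<Rightarrow> 'b) \<Rightarrow> 'b \<Rightarrow>
    ('b + ('a \<times> nat)) list" where
  "theta_edge G enum e =
     map (\<lambda>i. Inr (head G e, i)) [1..<Suc (lagpos G enum e)] @ [Inl e]"

fun theta :: "('a,'b) pre_digraph \<Rightarrow> ('a \<Rightarrow> nat \<Rightarrow> 'b) \<Rightarrow>
    ('a,'b) gpath \<Rightarrow> ('a \<times> nat, 'b + ('a \<times> nat)) gpath" where
  "theta G enum (Inl v) = Inl (v, 0)"
| "theta G enum (Inr es) = Inr (concat (map (theta_edge G enum) es))"

end

theory Submission
  imports Defs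
begin

text \<open>The v-lag replaces the d edges into v by the chain v_(d-2) \<rightarrow> ... \<rightarrow> v_1 \<rightarrow> v of
  new edges f_i and redirects e_j to v_j, except that e_(d-2) and e_(d-1) both end at the top
  vertex v_(d-2). Hence every vertex of the chain receives exactly two edges.
  The map \<theta> replaces e_j by the walk f_1 ... f_j (hat e_j) down the chain, and it is injective
  because the edges hat e occurring in \<theta>(p) spell out p. Conversely, a path of hat G that
  enters the chain at v_i must run down f_i, ..., f_1 to v, so a path between original
  vertices splits uniquely into blocks \<theta>(e).\<close>

definition is_arc_path :: "('a,'b) pre_digraph \<Rightarrow> 'b list \<Rightarrow> bool" where
  "is_arc_path G es \<longleftrightarrow>
     es \<noteq> [] \<and> set es \<subseteq> arcs G \<and> successively (\<lambda>a b. tail G a = head G b) es"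

lemma Inl_in_dpaths_iff: "Inl v \<in> dpaths G \<longleftrightarrow> v \<in> verts G"
  by (auto simp: dpaths_def)

lemma Inr_in_dpaths_iff: "Inr es \<in> dpaths G \<longleftrightarrow> is_arc_path G es"
  by (auto simp: dpaths_def is_arc_path_def successively_conv_nth)

lemma is_arc_path_Cons:
  "is_arc_path G (a # es) \<longleftrightarrow>
     a \<in> arcs G \<and> (es \<noteq> [] \<longrightarrow> is_arc_path G es \<and> tail G a = head G (hd es))"
  by (auto simp: is_arc_path_def successively_Cons)

lemma is_arc_path_append:
  assumes "es \<noteq> []" and "fs \<noteq> []"
  shows "is_arc_path G (es @ fs) \<longleftrightarrow>
    is_arc_path G es \<and> is_arc_path G fs \<and> tail G (last es) = head G (hd fs)"
  using assms by (auto simp: is_arc_path_def successively_append_iff)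

lemma (in wf_digraph) dpaths_ends_in_verts:
  assumes "p \<in> dpaths G"
  shows "prange G p \<in> verts G \<and> psource G p \<in> verts G"
proof (cases p)
  case (Inr es)
  with assms have "is_arc_path G es"
    by (simp add: Inr_in_dpaths_iff)
  then have "hd es \<in> arcs G" and "last es \<in> arcs G"
    unfolding is_arc_path_def using hd_in_set last_in_set by blast+
  with Inr show ?thesis
    by simp
qed (use assms in \<open>simp_all add: Inl_in_dpaths_iff\<close>)

lemma eidx_enum:
  assumes "valid_enum G enum" and "v \<in> verts G" and "j < in_degree G v"
  shows "eidx G enum (enum v j) = j"
proof -
  have bij: "bij_betw (enum v) {..<in_degree G v} (in_arcs G v)"
    using assms(1,2) by (simp add: valid_enum_def)
  then have "head G (enum v j) = v"
    using assms(3) by (auto dest: bij_betwE)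
  with bij assms(3) show ?thesis
    unfolding eidx_def by (auto simp: bij_betw_def inj_on_def)
qed

lemma verts_lag_graph:
  "verts (lag_graph G enum) =
     {(v, i). v \<in> verts G \<and> (i = 0 \<or> 3 \<le> in_degree G v \<and> 1 \<le> i \<and> i \<le> in_degree G v - 2)}"
  by (simp add: lag_graph_def)

lemma arcs_lag_graph:
  "arcs (lag_graph G enum) = Inl ` arcs G \<union>
     Inr ` {(v, i). v \<in> verts G \<and> 3 \<le> in_degree G v \<and> 1 \<le> i \<and> i \<le> in_degree G v - 2}"
  by (simp add: lag_graph_def)

lemma tail_lag_graph [simp]:
  "tail (lag_graph G enum) (Inl e) = (tail G e, 0)"
  "tail (lag_graph G enum) (Inr (v, i)) = (v, i)"
  by (simp_all add: lag_graph_def)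

lemma head_lag_graph [simp]:
  "head (lag_graph G enum) (Inl e) = (head G e, lagpos G enum e)"
  "head (lag_graph G enum) (Inr (v, i)) = (v, i - 1)"
  by (simp_all add: lag_graph_def)

definition lag_level :: "nat \<Rightarrow> nat \<Rightarrow> nat" where
  "lag_level d j = (if 3 \<le> d then min j (d - 2) else 0)"

lemma lagpos_eq_lag_level:
  "lagpos G enum e = lag_level (in_degree G (head G e)) (eidx G enum e)"
  by (simp add: lagpos_def lag_level_def)

text \<open>Vertex v_i of the chain receives e_i (both e_(d-2) and e_(d-1) at the top, i = d - 2)
  and, below the top, f_(i+1).\<close>

lemma card_lag_level_fibre:
  assumes "2 \<le> d" and "i = 0 \<or> 3 \<le> d \<and> 1 \<le> i \<and> i \<le> d - 2"
  shows "card {j. j < d \<and> lag_level d j = i} + (if 3 \<le> d \<and> Suc i \<le> d - 2 then 1 else 0) = 2"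
proof (cases "3 \<le> d")
  case False
  then have "d = 2" and "i = 0"
    using assms by auto
  moreover have "{j. j < 2 \<and> lag_level 2 j = 0} = {0, 1}"
    by (auto simp: lag_level_def)
  ultimately show ?thesis
    by simp
next
  case True
  consider "i < d - 2" | "i = d - 2"
    using assms True by linarith
  then show ?thesis
  proof cases
    case 1
    then have "{j. j < d \<and> lag_level d j = i} = {i}"
      using True by (auto simp: lag_level_def)
    with 1 True show ?thesis
      by simp
  next
    case 2
    then have "{j. j < d \<and> lag_level d j = i} = {d - 2, d - 1}"
      using True by (auto simp: lag_level_def)
    with 2 True show ?thesis
      by simp
  qed
qed

lemma in_arcs_lag_graph:
  "in_arcs (lag_graph G enum) (v, i) =
     Inl ` {e \<in> in_arcs G v. lagpos G enum e = i}
     \<union> Inr ` (if v \<in> verts G \<and> 3 \<le> in_degree G v \<and> Suc i \<le> in_degree G v - 2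
              then {(v, Suc i)} else {})"
  by (auto simp: lag_graph_def image_iff split: sum.splits)

lemma card_in_arcs_lagpos:
  assumes "valid_enum G enum" and "v \<in> verts G"
  shows "card {e \<in> in_arcs G v. lagpos G enum e = i} =
    card {j. j < in_degree G v \<and> lag_level (in_degree G v) j = i}"
proof -
  let ?d = "in_degree G v"
  have bij: "bij_betw (enum v) {..<?d} (in_arcs G v)"
    using assms by (simp add: valid_enum_def)
  have lagpos_enum: "lagpos G enum (enum v j) = lag_level ?d j" if "j < ?d" for j
    using bij that eidx_enum[OF assms that]
    by (auto simp: lagpos_eq_lag_level dest: bij_betwE)
  have "{e \<in> in_arcs G v. lagpos G enum e = i} = {e \<in> enum v ` {..<?d}. lagpos G enum e = i}"
    using bij by (simp add: bij_betw_def)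
  also have "\<dots> = enum v ` {j \<in> {..<?d}. lagpos G enum (enum v j) = i}"
    by blast
  also have "\<dots> = enum v ` {j. j < ?d \<and> lag_level ?d j = i}"
    using lagpos_enum by auto
  finally have "{e \<in> in_arcs G v. lagpos G enum e = i} = enum v ` {j. j < ?d \<and> lag_level ?d j = i}" .
  moreover have "inj_on (enum v) {j. j < ?d \<and> lag_level ?d j = i}"
    using bij by (auto simp: bij_betw_def intro: inj_on_subset)
  ultimately show ?thesis
    by (simp add: card_image)
qed

lemma in_degree_lag_graph:
  assumes "fin_digraph G" and "valid_enum G enum" and "\<forall>v\<in>verts G. 2 \<le> in_degree G v"
    and "x \<in> verts (lag_graph G enum)"
  shows "in_degree (lag_graph G enum) x = 2"
proof -
  obtain v i where x: "x = (v, i)"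
    by (cases x)
  let ?d = "in_degree G v"
  have v: "v \<in> verts G" and i: "i = 0 \<or> 3 \<le> ?d \<and> 1 \<le> i \<and> i \<le> ?d - 2"
    using assms(4) by (auto simp: x verts_lag_graph)
  let ?A = "{e \<in> in_arcs G v. lagpos G enum e = i}"
  let ?B = "if v \<in> verts G \<and> 3 \<le> ?d \<and> Suc i \<le> ?d - 2 then {(v, Suc i)} else {}"
  have "finite ?A"
    using fin_digraph.finite_in_arcs[OF assms(1), of v] by (rule rev_finite_subset) blast
  then have "in_degree (lag_graph G enum) x = card ?A + card ?B"
    unfolding x in_degree_def in_arcs_lag_graph by (subst card_Un_disjoint) (auto simp: card_image)
  also have "\<dots> = card ?A + (if 3 \<le> ?d \<and> Suc i \<le> ?d - 2 then 1 else 0)"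
    using v by simp
  also have "\<dots> = 2"
    using card_lag_level_fibre[OF _ i] card_in_arcs_lagpos[OF assms(2) v] assms(3) v by simp
  finally show ?thesis .
qed

lemma length_theta_edge: "length (theta_edge G enum e) = Suc (lagpos G enum e)"
  by (simp add: theta_edge_def)

lemma theta_edge_nonempty [simp]: "theta_edge G enum e \<noteq> []"
  by (simp add: theta_edge_def)

lemma nth_theta_edge:
  assumes "n \<le> lagpos G enum e"
  shows "theta_edge G enum e ! n = (if n < lagpos G enum e then Inr (head G e, Suc n) else Inl e)"
  using assms by (auto simp: theta_edge_def nth_append)

lemma head_nth_theta_edge:
  assumes "n \<le> lagpos G enum e"
  shows "head (lag_graph G enum) (theta_edge G enum e ! n) = (head G e, n)"
  using assms by (simp add: nth_theta_edge)

lemma drop_lagpos_theta_edge: "drop (lagpos G enum e) (theta_edge G enum e) = [Inl e]"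
  by (simp add: theta_edge_def)

lemma lagpos_le_in_degree:
  assumes "0 < lagpos G enum e"
  shows "3 \<le> in_degree G (head G e) \<and> lagpos G enum e \<le> in_degree G (head G e) - 2"
  using assms by (auto simp: lagpos_def split: if_splits)

lemma (in wf_digraph) theta_edge_is_arc_path:
  assumes "e \<in> arcs G"
  shows "is_arc_path (lag_graph G enum) (theta_edge G enum e)"
proof -
  let ?L = "lag_graph G enum" and ?k = "lagpos G enum e"
  have "set (theta_edge G enum e) \<subseteq> arcs ?L"
    using assms lagpos_le_in_degree[of G enum e]
    by (auto simp: theta_edge_def arcs_lag_graph)
  moreover have "tail ?L (theta_edge G enum e ! n) = head ?L (theta_edge G enum e ! Suc n)"
    if "n < ?k" for n
    using that by (simp add: head_nth_theta_edge nth_theta_edge)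
  ultimately show ?thesis
    by (auto simp: is_arc_path_def successively_conv_nth theta_edge_def)
qed

lemma head_hd_theta_edge:
  "head (lag_graph G enum) (hd (theta_edge G enum e)) = (head G e, 0)"
  using head_nth_theta_edge[of 0 G enum e] by (simp add: hd_conv_nth theta_edge_def)

lemma tail_last_theta_edge:
  "tail (lag_graph G enum) (last (theta_edge G enum e)) = (tail G e, 0)"
  by (simp add: theta_edge_def)

lemma (in wf_digraph) theta_edges_is_arc_path:
  assumes "is_arc_path G es"
  shows "is_arc_path (lag_graph G enum) (concat (map (theta_edge G enum) es))
    \<and> head (lag_graph G enum) (hd (concat (map (theta_edge G enum) es))) = (head G (hd es), 0)
    \<and> tail (lag_graph G enum) (last (concat (map (theta_edge G enum) es))) = (tail G (last es), 0)"
  using assms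
proof (induction es)
  case Nil
  then show ?case
    by (simp add: is_arc_path_def)
next
  case (Cons e es)
  let ?L = "lag_graph G enum" and ?C = "concat (map (theta_edge G enum) es)"
  have e: "e \<in> arcs G"
    using Cons.prems by (simp add: is_arc_path_Cons)
  show ?case
  proof (cases "es = []")
    case True
    then show ?thesis
      using theta_edge_is_arc_path[OF e] by (simp add: head_hd_theta_edge tail_last_theta_edge)
  next
    case False
    then have es: "is_arc_path G es" and link: "tail G e = head G (hd es)"
      using Cons.prems by (simp_all add: is_arc_path_Cons)
    have "?C \<noteq> []"
      using Cons.IH[OF es] by (simp add: is_arc_path_def)
    then show ?thesis
      using Cons.IH[OF es] False link theta_edge_is_arc_path[OF e]
      by (simp add: is_arc_path_append head_hd_theta_edge tail_last_theta_edge)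
  qed
qed

lemma (in wf_digraph) theta_in_dpaths:
  assumes "p \<in> dpaths G"
  shows "theta G enum p \<in> dpaths (lag_graph G enum)
    \<and> prange (lag_graph G enum) (theta G enum p) = (prange G p, 0)
    \<and> psource (lag_graph G enum) (theta G enum p) = (psource G p, 0)"
proof (cases p)
  case (Inl v)
  with assms show ?thesis
    by (simp add: Inl_in_dpaths_iff verts_lag_graph)
next
  case (Inr es)
  with assms theta_edges_is_arc_path[of es enum] show ?thesis
    by (simp add: Inr_in_dpaths_iff)
qed

lemma Inl_arcs_theta_edges: "[e. Inl e \<leftarrow> concat (map (theta_edge G enum) es)] = es"
  by (induction es) (simp_all add: theta_edge_def)

lemma inj_theta: "inj (theta G enum)"
proof (rule injI)
  fix p q
  assume eq: "theta G enum p = theta G enum q"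
  show "p = q"
  proof (cases p)
    case (Inl v)
    with eq show ?thesis
      by (cases q) simp_all
  next
    case (Inr es)
    with eq obtain es' where q: "q = Inr es'"
      and "concat (map (theta_edge G enum) es) = concat (map (theta_edge G enum) es')"
      by (cases q) simp_all
    have "es = [e. Inl e \<leftarrow> concat (map (theta_edge G enum) es)]"
      by (rule Inl_arcs_theta_edges[symmetric])
    also have "\<dots> = es'"
      unfolding \<open>concat (map (theta_edge G enum) es) = _\<close> by (rule Inl_arcs_theta_edges)
    finally have "es = es'" .
    with Inr q show ?thesis
      by simp
  qed
qed

text \<open>The level of the range of the first arc says how much of \<theta>(e) has been cut off.\<close>

lemma lag_path_decomposition:
  assumes "is_arc_path (lag_graph G enum) fs"
    and "snd (tail (lag_graph G enum) (last fs)) = 0"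
  shows "\<exists>e es. is_arc_path G (e # es)
    \<and> snd (head (lag_graph G enum) (hd fs)) \<le> lagpos G enum e
    \<and> fs = drop (snd (head (lag_graph G enum) (hd fs))) (theta_edge G enum e)
           @ concat (map (theta_edge G enum) es)"
  using assms
proof (induction fs)
  case Nil
  then show ?case
    by (simp add: is_arc_path_def)
next
  case (Cons a fs)
  let ?L = "lag_graph G enum"
  have a: "a \<in> arcs ?L"
    and fs: "fs \<noteq> [] \<Longrightarrow> is_arc_path ?L fs \<and> tail ?L a = head ?L (hd fs)"
    using Cons.prems(1) by (simp_all add: is_arc_path_Cons)
  show ?case
  proof (cases a)
    case (Inl e)
    have e: "e \<in> arcs G"
      using a Inl by (auto simp: arcs_lag_graph)
    show ?thesis
    proof (cases "fs = []")
      case True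
      with e Inl show ?thesis
        by (intro exI[of _ e] exI[of _ "[]"])
          (simp add: is_arc_path_Cons drop_lagpos_theta_edge)
    next
      case False
      then have "snd (head ?L (hd fs)) = 0"
        using fs Inl by (metis snd_conv tail_lag_graph(1))
      with False Cons.IH fs Cons.prems(2) obtain e' es where
        path: "is_arc_path G (e' # es)" and
        fs_eq: "fs = theta_edge G enum e' @ concat (map (theta_edge G enum) es)"
        by auto
      have "head ?L (hd fs) = (head G e', 0)"
        using fs_eq head_hd_theta_edge[of G enum e'] by (simp add: hd_append)
      then have "tail G e = head G e'"
        using fs False Inl by simp
      with e path fs_eq Inl show ?thesis
        by (intro exI[of _ e] exI[of _ "e' # es"])
          (simp add: is_arc_path_Cons drop_lagpos_theta_edge)
    qed
  next
    case (Inr y)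
    obtain v i where y: "y = (v, i)"
      by (cases y)
    have i: "1 \<le> i"
      using a Inr y by (auto simp: arcs_lag_graph)
    have "fs \<noteq> []"
      using Cons.prems(2) Inr y i by auto
    with fs Inr y have "is_arc_path ?L fs" and head_fs: "head ?L (hd fs) = (v, i)"
      by simp_all
    with Cons.IH Cons.prems(2) \<open>fs \<noteq> []\<close> obtain e es where
      path: "is_arc_path G (e # es)" and i_le: "i \<le> lagpos G enum e" and
      fs_eq: "fs = drop i (theta_edge G enum e) @ concat (map (theta_edge G enum) es)"
      by auto
    have "hd fs = theta_edge G enum e ! i"
      using fs_eq i_le by (simp add: length_theta_edge hd_append hd_drop_conv_nth)
    then have "v = head G e"
      using head_fs head_nth_theta_edge[OF i_le] by simp
    then have "drop (i - 1) (theta_edge G enum e) = a # drop i (theta_edge G enum e)"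
      using i i_le Inr y
      by (simp add: Cons_nth_drop_Suc[symmetric] length_theta_edge nth_theta_edge)
    with path i_le fs_eq Inr y show ?thesis
      by (intro exI[of _ e] exI[of _ es]) simp
  qed
qed

lemma level0_lag_path_in_theta_image:
  assumes "q \<in> dpaths (lag_graph G enum)"
    and "snd (prange (lag_graph G enum) q) = 0" and "snd (psource (lag_graph G enum) q) = 0"
  shows "q \<in> theta G enum ` dpaths G"
proof (cases q)
  case (Inl x)
  with assms obtain v where "q = theta G enum (Inl v)" and "Inl v \<in> dpaths G"
    by (cases x) (auto simp: Inl_in_dpaths_iff verts_lag_graph)
  then show ?thesis
    by blast
next
  case (Inr fs)
  with assms obtain e es where "is_arc_path G (e # es)"
    and "fs = theta_edge G enum e @ concat (map (theta_edge G enum) es)"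
    using lag_path_decomposition[of G enum fs] by (auto simp: Inr_in_dpaths_iff)
  with Inr have "q = theta G enum (Inr (e # es))" and "Inr (e # es) \<in> dpaths G"
    by (simp_all add: Inr_in_dpaths_iff)
  then show ?thesis
    by blast
qed

theorem corollary3p8:
  fixes G :: "('a,'b) pre_digraph" and enum :: "'a \<Rightarrow> nat \<Rightarrow> 'b"
  assumes "fin_digraph G"
    and "transitive_graph G"
    and "\<forall>v\<in>verts G. 2 \<le> in_degree G v"
    and "valid_enum G enum"
  shows "in_degree_2_regular (lag_graph G enum)
    \<and> inj_on (\<lambda>v. (v, 0::nat)) (verts G)
    \<and> (\<lambda>v. (v, 0::nat)) ` verts G \<subseteq> verts (lag_graph G enum)
    \<and> bij_betw (theta G enum) (dpaths G)
         {p \<in> dpaths (lag_graph G enum).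
            prange (lag_graph G enum) p \<in> (\<lambda>v. (v, 0)) ` verts G
          \<and> psource (lag_graph G enum) p \<in> (\<lambda>v. (v, 0)) ` verts G}"
proof -
  interpret fin_digraph G
    by (rule assms(1))
  let ?L = "lag_graph G enum" and ?V = "(\<lambda>v. (v, 0::nat)) ` verts G"
  have "theta G enum ` dpaths G = {p \<in> dpaths ?L. prange ?L p \<in> ?V \<and> psource ?L p \<in> ?V}"
  proof (intro equalityI subsetI)
    fix q
    assume "q \<in> theta G enum ` dpaths G"
    then show "q \<in> {p \<in> dpaths ?L. prange ?L p \<in> ?V \<and> psource ?L p \<in> ?V}"
      using theta_in_dpaths dpaths_ends_in_verts by fastforce
  next
    fix q
    assume "q \<in> {p \<in> dpaths ?L. prange ?L p \<in> ?V \<and> psource ?L p \<in> ?V}"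
    then show "q \<in> theta G enum ` dpaths G"
      by (auto intro: level0_lag_path_in_theta_image)
  qed
  moreover have "in_degree_2_regular ?L"
    unfolding in_degree_2_regular_def using in_degree_lag_graph[OF assms(1,4,3)] by blast
  moreover have "inj_on (theta G enum) (dpaths G)"
    using inj_theta by (rule inj_on_subset) simp
  ultimately show ?thesis
    by (auto simp: bij_betw_def inj_on_def verts_lag_graph)
qed

end
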